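(* Let $X_1=X_2=\mathbb R^d$, let $\mu_1=\mu_2$ be the uniform distribution on $[0,1]^d$, and let $c(x,y)=\sum_{i=1}^d|x_i-y_i|$. Then for $q>1$ and every $\varepsilon>0$, $$\mathrm{OT}_{q,\varepsilon}-\mathrm{OT}\ge\tilde K_{1,q}\,\varepsilon^{\frac{1}{(q-1)d+1}}-\tilde K_{2,q}\,\varepsilon,$$ where $$\tilde K_{1,q}=\frac{(q-1)d+1}{(q-1)d+q}\left[\frac{q-1}{((q-1)d+q)\,2^{\frac{(q-1)d+1}{q-1}}}\left(\frac{q}{q-1}\right)^{\frac{q}{q-1}}\right]^{\frac{q-1}{(q-1)d+1}},\qquad \tilde K_{2,q}=\left(1+2^{\frac{(q-1)d+1}{q-1}}\right)q^{-\frac{q}{q-1}}.$$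
   Context: $\Pi(\mu_1,\mu_2)$ is the set of couplings of $\mu_1,\mu_2$. The Tsallis relative entropy is $D_q(\mu,\nu)=\frac{1}{q-1}\int\big[(\frac{d\mu}{d\nu})^q-\frac{d\mu}{d\nu}\big]\,d\nu$ if $\mu\ll\nu$ and $q>1$, $+\infty$ otherwise. $\mathrm{OT}=\inf_{\pi\in\Pi(\mu_1,\mu_2)}\int c\,d\pi$ and $\mathrm{OT}_{q,\varepsilon}=\inf_{\pi\in\Pi(\mu_1,\mu_2)}\{\int c\,d\pi+\varepsilon D_q(\pi,\mu_1\otimes\mu_2)\}$. *)

theory Defs
  imports "HOL-Probability.Probability"
begin

definition couplings :: "'a::topological_space measure \<Rightarrow> 'b::topological_space measure \<Rightarrow> ('a \<times> 'b) measure set" where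
  "couplings \<mu>1 \<mu>2 = {\<pi>. prob_space \<pi> \<and> sets \<pi> = sets (borel \<Otimes>\<^sub>M borel)
      \<and> distr \<pi> borel fst = \<mu>1 \<and> distr \<pi> borel snd = \<mu>2}"

text \<open>Tsallis relative entropy D_q(mu, nu) = 1/(q-1) * integral of ((dmu/dnu)^q - dmu/dnu) dnu
  if mu << nu and q > 1, and +infinity otherwise.  The integrand is split into its two
  nonnegative parts (the second one integrates to a finite value).\<close>
definition tsallis :: "real \<Rightarrow> 'a measure \<Rightarrow> 'a measure \<Rightarrow> ereal" where
  "tsallis q \<mu> \<nu> =
     (if q > 1 \<and> sets \<mu> = sets \<nu> \<and> absolutely_continuous \<nu> \<mu> then
        ereal (1 / (q - 1)) *
          (enn2ereal (\<integral>\<^sup>+ x. ennreal (enn2real (RN_deriv \<nu> \<mu> x) powr q) \<partial>\<nu>)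
           - enn2ereal (\<integral>\<^sup>+ x. ennreal (enn2real (RN_deriv \<nu> \<mu> x)) \<partial>\<nu>))
      else \<infinity>)"

definition OT :: "('a::topological_space \<times> 'b::topological_space \<Rightarrow> real) \<Rightarrow> 'a measure \<Rightarrow> 'b measure \<Rightarrow> ereal" where
  "OT c \<mu>1 \<mu>2 = (INF \<pi>\<in>couplings \<mu>1 \<mu>2. enn2ereal (\<integral>\<^sup>+ z. ennreal (c z) \<partial>\<pi>))"

definition OT_reg :: "real \<Rightarrow> real \<Rightarrow> ('a::topological_space \<times> 'b::topological_space \<Rightarrow> real) \<Rightarrow> 'a measure \<Rightarrow> 'b measure \<Rightarrow> ereal" where
  "OT_reg q \<epsilon> c \<mu>1 \<mu>2 = (INF \<pi>\<in>couplings \<mu>1 \<mu>2.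
      enn2ereal (\<integral>\<^sup>+ z. ennreal (c z) \<partial>\<pi>) + ereal \<epsilon> * tsallis q \<pi> (\<mu>1 \<Otimes>\<^sub>M \<mu>2))"

definition l1_cost :: "(real^'n) \<times> (real^'n) \<Rightarrow> real" where
  "l1_cost z = (\<Sum>i\<in>UNIV. \<bar>fst z $ i - snd z $ i\<bar>)"

definition unif_cube :: "(real^'n) measure" where
  "unif_cube = uniform_measure lborel {x. \<forall>i. 0 \<le> x $ i \<and> x $ i \<le> 1}"

end

theory Submission
  imports Defs
begin

(* For a coupling pi with density g with respect to nu = mu x mu, Young's inequality gives,
   for every t > 0 and a = eps/(q-1), the pointwise bound
     t g <= c g + a g^q + young_conj q a t [c <= t].
   Integrating against nu, where g has mass 1, turns this into
     int c dpi + eps D_q(pi, nu) >= t - young_conj q a t nu{c <= t} - eps/(q-1),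
   and for the l1 cost on the unit cube nu{c <= t} <= (2t)^d. The diagonal coupling shows
   OT = 0. Taking t of order eps^(1/((q-1)d+1)) produces the first term of the bound, and the
   elementary estimate (s+1)(1+1/s)^s <= 1 + 2^(s+1) for s = 1/(q-1) shows that the
   constant in front of eps dominates 1/(q-1). *)

section \<open>Young's inequality\<close>

(* The convex conjugate of g \<mapsto> a g^q on [0, \<infinity>): the supremum over g >= 0 of t g - a g^q. *)
definition young_conj :: "real \<Rightarrow> real \<Rightarrow> real \<Rightarrow> real" where
  "young_conj q a t = (q - 1) / q * t powr (q / (q - 1)) * (a * q) powr (- 1 / (q - 1))"

lemma young_conj_nonneg: "q > 1 \<Longrightarrow> 0 \<le> young_conj q a t"
  by (simp add: young_conj_def)

lemma mult_le_power_plus_young_conj: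
  fixes q a t g :: real
  assumes q: "q > 1" and a: "a > 0" and "t \<ge> 0" "g \<ge> 0"
  shows "t * g \<le> a * g powr q + young_conj q a t"
proof -
  define p where "p = q / (q - 1)"
  define A where "A = g * (a * q) powr (1 / q)"
  define B where "B = t * (a * q) powr (- 1 / q)"
  have aq: "a * q > 0" using q a by simp
  have "A * B = t * g"
    using aq a q by (simp add: A_def B_def powr_add[symmetric] field_simps)
  moreover have "A powr q / q = a * g powr q"
    using aq a q \<open>g \<ge> 0\<close> by (simp add: A_def powr_mult powr_powr)
  moreover have "B powr p / p = young_conj q a t"
    using aq q \<open>t \<ge> 0\<close> by (simp add: B_def p_def young_conj_def powr_mult powr_powr)
  moreover have "A * B \<le> A powr q / q + B powr p / p"
    using q assms by (intro Youngs_inequality) (auto simp: A_def B_def p_def field_simps)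
  ultimately show ?thesis by linarith
qed

lemma mult_le_cost_plus_young_conj:
  fixes q a t g c :: real
  assumes "q > 1" "a > 0" "t \<ge> 0" "g \<ge> 0" "c \<ge> 0"
  shows "t * g \<le> g * c + a * g powr q + young_conj q a t * of_bool (c \<le> t)"
proof (cases "c \<le> t")
  case True
  then show ?thesis
    using mult_le_power_plus_young_conj[OF assms(1-4)] mult_nonneg_nonneg[OF assms(4,5)] by simp
next
  case False
  then have "t * g \<le> c * g"
    using assms(4) by (intro mult_right_mono) auto
  moreover have "0 \<le> a * g powr q"
    using assms(2) by simp
  ultimately show ?thesis
    using False by (simp add: mult.commute)
qed

section \<open>Cost of a coupling\<close>

lemma (in sigma_finite_measure) nn_integral_real_RN_deriv:
  assumes "sigma_finite_measure N" "absolutely_continuous M N" "sets N = sets M"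
    and "f \<in> borel_measurable M"
  shows "(\<integral>\<^sup>+x. ennreal (f x) \<partial>N) = (\<integral>\<^sup>+x. ennreal (enn2real (RN_deriv M N x) * f x) \<partial>M)"
proof -
  have "(\<integral>\<^sup>+x. ennreal (f x) \<partial>N) = (\<integral>\<^sup>+x. RN_deriv M N x * ennreal (f x) \<partial>M)"
    using assms by (intro RN_deriv_nn_integral) auto
  also have "\<dots> = (\<integral>\<^sup>+x. ennreal (enn2real (RN_deriv M N x) * f x) \<partial>M)"
    using RN_deriv_finite[OF assms(1-3)]
    by (intro nn_integral_cong_AE) (auto simp: ennreal_mult' less_top)
  finally show ?thesis .
qed

lemma (in sigma_finite_measure) nn_integral_real_RN_deriv_eq_1:
  assumes "prob_space N" "absolutely_continuous M N" "sets N = sets M"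
  shows "(\<integral>\<^sup>+x. ennreal (enn2real (RN_deriv M N x)) \<partial>M) = 1"
proof -
  interpret N: prob_space N by fact
  have "(\<integral>\<^sup>+x. ennreal (enn2real (RN_deriv M N x)) \<partial>M) = (\<integral>\<^sup>+x. ennreal 1 \<partial>N)"
    using nn_integral_real_RN_deriv[OF N.sigma_finite_measure_axioms assms(2,3), of "\<lambda>_. 1"]
    by simp
  also have "\<dots> = 1"
    using N.emeasure_space_1 by simp
  finally show ?thesis .
qed

lemma (in sigma_finite_measure) tsallis_eq:
  assumes "prob_space N" "absolutely_continuous M N" "sets N = sets M" "q > 1"
  shows "tsallis q N M = ereal (1 / (q - 1)) *
    (enn2ereal (\<integral>\<^sup>+x. ennreal (enn2real (RN_deriv M N x) powr q) \<partial>M) - 1)"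
  using assms nn_integral_real_RN_deriv_eq_1[OF assms(1-3)] by (simp add: tsallis_def one_ennreal.rep_eq)

lemma (in sigma_finite_measure) threshold_le_cost_plus_power_integral:
  fixes N :: "'a measure" and c :: "'a \<Rightarrow> real"
  assumes N: "prob_space N" "absolutely_continuous M N" "sets N = sets M"
    and c: "c \<in> borel_measurable M" "\<And>x. 0 \<le> c x"
    and q: "q > 1" and a: "a > 0" and t: "t \<ge> 0"
  shows "ennreal t \<le> (\<integral>\<^sup>+x. ennreal (c x) \<partial>N)
    + ennreal a * (\<integral>\<^sup>+x. ennreal (enn2real (RN_deriv M N x) powr q) \<partial>M)
    + ennreal (young_conj q a t) * emeasure M {x \<in> space M. c x \<le> t}"
proof -
  define g where "g x = enn2real (RN_deriv M N x)" for x
  define A where "A = {x \<in> space M. c x \<le> t}"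
  note c(1)[measurable]
  have [measurable]: "g \<in> borel_measurable M"
    unfolding g_def[abs_def] by measurable
  have [measurable]: "A \<in> sets M"
    unfolding A_def by measurable
  have pointwise: "ennreal (t * g x) \<le> ennreal (g x * c x) + ennreal a * ennreal (g x powr q)
      + ennreal (young_conj q a t) * indicator A x" if "x \<in> space M" for x
  proof -
    have "ennreal (t * g x) \<le> ennreal (g x * c x + a * g x powr q + young_conj q a t * indicator A x)"
      using mult_le_cost_plus_young_conj[OF q a t _ c(2), of "g x" x] that
      by (intro ennreal_leI) (simp add: g_def A_def indicator_def)
    also have "\<dots> = ennreal (g x * c x) + ennreal a * ennreal (g x powr q)
        + ennreal (young_conj q a t) * indicator A x"
      using a c(2)[of x] young_conj_nonneg[OF q]
      by (simp add: g_def ennreal_mult ennreal_indicator)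
    finally show ?thesis .
  qed
  have "ennreal t = ennreal t * (\<integral>\<^sup>+x. ennreal (g x) \<partial>M)"
    using nn_integral_real_RN_deriv_eq_1[OF N] by (simp add: g_def)
  also have "\<dots> = (\<integral>\<^sup>+x. ennreal (t * g x) \<partial>M)"
    using t by (simp add: nn_integral_cmult ennreal_mult')
  also have "\<dots> \<le> (\<integral>\<^sup>+x. ennreal (g x * c x) + ennreal a * ennreal (g x powr q)
      + ennreal (young_conj q a t) * indicator A x \<partial>M)"
    by (intro nn_integral_mono pointwise)
  also have "\<dots> = (\<integral>\<^sup>+x. ennreal (g x * c x) \<partial>M)
      + ennreal a * (\<integral>\<^sup>+x. ennreal (g x powr q) \<partial>M)
      + ennreal (young_conj q a t) * emeasure M A"
    by (simp add: nn_integral_add nn_integral_cmult nn_integral_cmult_indicator)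
  also have "(\<integral>\<^sup>+x. ennreal (g x * c x) \<partial>M) = (\<integral>\<^sup>+x. ennreal (c x) \<partial>N)"
    using nn_integral_real_RN_deriv[OF prob_space_imp_sigma_finite[OF N(1)] N(2,3) c(1)]
    by (simp add: g_def)
  finally show ?thesis
    by (simp add: g_def A_def)
qed

lemma ereal_diff_le_of_ennreal_bound:
  fixes I J :: ennreal and t a K :: real
  assumes le: "ennreal t \<le> I + ennreal a * J + ennreal K" and a: "a > 0" and K: "K \<ge> 0"
  shows "ereal (t - K - a) \<le> enn2ereal I + ereal a * (enn2ereal J - 1)"
proof (cases "I = \<top> \<or> J = \<top>")
  case True
  then show ?thesis
    using a by (auto simp: one_ennreal.rep_eq)
next
  case False
  then obtain i j where ij: "I = ennreal i" "J = ennreal j" "0 \<le> i" "0 \<le> j"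
    by (metis ennreal_cases)
  then have "t \<le> i + a * j + K"
    using le a K
    by (simp add: ennreal_mult[symmetric] ennreal_plus[symmetric] ennreal_le_iff del: ennreal_plus)
  then show ?thesis
    using ij by (simp add: one_ennreal.rep_eq one_ereal_def algebra_simps)
qed

lemma (in sigma_finite_measure) cost_plus_tsallis_ge:
  fixes N :: "'a measure" and c :: "'a \<Rightarrow> real"
  assumes N: "prob_space N"
    and c: "c \<in> borel_measurable M" "\<And>x. 0 \<le> c x"
    and q: "q > 1" and \<epsilon>: "\<epsilon> > 0" and t: "t \<ge> 0"
    and B: "emeasure M {x \<in> space M. c x \<le> t} \<le> ennreal B" "0 \<le> B"
  shows "ereal (t - young_conj q (\<epsilon> / (q - 1)) t * B - \<epsilon> / (q - 1))
    \<le> enn2ereal (\<integral>\<^sup>+x. ennreal (c x) \<partial>N) + ereal \<epsilon> * tsallis q N M"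
proof (cases "absolutely_continuous M N \<and> sets N = sets M")
  case True
  define a where "a = \<epsilon> / (q - 1)"
  have a: "a > 0"
    using q \<epsilon> by (simp add: a_def)
  have "ennreal t \<le> (\<integral>\<^sup>+x. ennreal (c x) \<partial>N)
      + ennreal a * (\<integral>\<^sup>+x. ennreal (enn2real (RN_deriv M N x) powr q) \<partial>M)
      + ennreal (young_conj q a t) * emeasure M {x \<in> space M. c x \<le> t}"
    using True by (intro threshold_le_cost_plus_power_integral N c q a t) auto
  also have "\<dots> \<le> (\<integral>\<^sup>+x. ennreal (c x) \<partial>N)
      + ennreal a * (\<integral>\<^sup>+x. ennreal (enn2real (RN_deriv M N x) powr q) \<partial>M)
      + ennreal (young_conj q a t * B)"
    using B young_conj_nonneg[OF q] by (auto simp: ennreal_mult intro!: add_left_mono mult_left_mono)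
  finally have "ereal (t - young_conj q a t * B - a)
      \<le> enn2ereal (\<integral>\<^sup>+x. ennreal (c x) \<partial>N)
        + ereal a * (enn2ereal (\<integral>\<^sup>+x. ennreal (enn2real (RN_deriv M N x) powr q) \<partial>M) - 1)"
    using a B young_conj_nonneg[OF q] by (intro ereal_diff_le_of_ennreal_bound) auto
  moreover have "ereal \<epsilon> * tsallis q N M
      = ereal a * (enn2ereal (\<integral>\<^sup>+x. ennreal (enn2real (RN_deriv M N x) powr q) \<partial>M) - 1)"
    using True by (simp add: tsallis_eq[OF N _ _ q] a_def mult.assoc[symmetric])
  ultimately show ?thesis
    by (simp add: a_def)
next
  case False
  then have "tsallis q N M = \<infinity>"
    by (auto simp: tsallis_def)
  then show ?thesis
    using \<epsilon> by simp
qed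

lemma diagonal_coupling:
  fixes \<mu> :: "'a::topological_space measure"
  assumes "prob_space \<mu>" "sets \<mu> = sets borel"
  shows "distr \<mu> (borel \<Otimes>\<^sub>M borel) (\<lambda>x. (x, x)) \<in> couplings \<mu> \<mu>"
proof -
  have diag: "(\<lambda>x. (x, x)) \<in> \<mu> \<rightarrow>\<^sub>M borel \<Otimes>\<^sub>M borel"
    using assms(2) by (simp add: measurable_ident_sets)
  have "distr (distr \<mu> (borel \<Otimes>\<^sub>M borel) (\<lambda>x. (x, x))) borel f = \<mu>"
    if "f = fst \<or> f = snd" for f
    using that diag assms(2) by (auto simp: distr_distr comp_def intro!: distr_id2)
  then show ?thesis
    using prob_space.prob_space_distr[OF assms(1) diag] by (simp add: couplings_def)
qed

lemma OT_self_eq_0: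
  fixes \<mu> :: "'a::topological_space measure" and c :: "'a \<times> 'a \<Rightarrow> real"
  assumes "prob_space \<mu>" "sets \<mu> = sets borel"
    and c: "c \<in> borel_measurable (borel \<Otimes>\<^sub>M borel)" "\<And>x. c (x, x) = 0"
  shows "OT c \<mu> \<mu> = 0"
proof -
  have diag: "(\<lambda>x. (x, x)) \<in> \<mu> \<rightarrow>\<^sub>M borel \<Otimes>\<^sub>M borel"
    using assms(2) by (simp add: measurable_ident_sets)
  have "(\<integral>\<^sup>+z. ennreal (c z) \<partial>distr \<mu> (borel \<Otimes>\<^sub>M borel) (\<lambda>x. (x, x))) = 0"
    using c by (simp add: nn_integral_distr[OF diag])
  then have "OT c \<mu> \<mu> \<le> 0"
    unfolding OT_def using diagonal_coupling[OF assms(1,2)]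
    by (metis (no_types, lifting) INF_lower zero_ennreal.rep_eq)
  moreover have "OT c \<mu> \<mu> \<ge> 0"
    unfolding OT_def by (rule INF_greatest) simp
  ultimately show ?thesis
    by simp
qed

section \<open>The uniform distribution on the unit cube\<close>

lemma cube_eq_cbox: "{x :: real^'n. \<forall>i. 0 \<le> x $ i \<and> x $ i \<le> 1} = cbox 0 1"
  by (auto simp: mem_box_cart)

lemma emeasure_lborel_cbox_cart:
  fixes a b :: "real^'n"
  assumes "\<And>i. a $ i \<le> b $ i"
  shows "emeasure lborel (cbox a b) = ennreal (\<Prod>i\<in>UNIV. b $ i - a $ i)"
proof -
  have "a \<in> cbox a b"
    using assms by (simp add: mem_box_cart)
  then have "cbox a b \<noteq> {}"
    by blast
  then show ?thesis
    using emeasure_lborel_cbox_finite[of a b] content_cbox_cart[of a b]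
    by (simp add: emeasure_eq_ennreal_measure content_def)
qed

lemma emeasure_lborel_unit_cube: "emeasure lborel {x :: real^'n. \<forall>i. 0 \<le> x $ i \<and> x $ i \<le> 1} = 1"
  unfolding cube_eq_cbox by (subst emeasure_lborel_cbox_cart) auto

lemma sets_unif_cube [simp]: "sets (unif_cube :: (real^'n) measure) = sets borel"
  by (simp add: unif_cube_def)

lemma prob_space_unif_cube: "prob_space (unif_cube :: (real^'n) measure)"
  unfolding unif_cube_def by (rule prob_space_uniform_measure) (simp_all add: emeasure_lborel_unit_cube)

lemma l1_cost_nonneg: "0 \<le> l1_cost z"
  by (simp add: l1_cost_def sum_nonneg)

lemma borel_measurable_l1_cost: "l1_cost \<in> borel_measurable (borel \<Otimes>\<^sub>M borel)"
  unfolding borel_prod l1_cost_def[abs_def]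
  by (intro borel_measurable_continuous_onI continuous_intros)

lemma emeasure_unif_cube_l1_ball_le:
  fixes x :: "real^'n"
  assumes "t \<ge> 0"
  shows "emeasure unif_cube {y. l1_cost (x, y) \<le> t} \<le> ennreal ((2 * t) ^ CARD('n))"
proof -
  define C :: "(real^'n) set" where "C = {x. \<forall>i. 0 \<le> x $ i \<and> x $ i \<le> 1}"
  define B where "B = {y. l1_cost (x, y) \<le> t}"
  have "B \<in> sets borel"
    using borel_measurable_l1_cost unfolding B_def borel_prod[symmetric] by measurable
  have "B \<subseteq> cbox (\<chi> i. x $ i - t) (\<chi> i. x $ i + t)"
  proof
    fix y assume "y \<in> B"
    then have coord: "\<bar>x $ i - y $ i\<bar> \<le> t" for i
      using member_le_sum[of i UNIV "\<lambda>i. \<bar>x $ i - y $ i\<bar>"] by (simp add: B_def l1_cost_def)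
    show "y \<in> cbox (\<chi> i. x $ i - t) (\<chi> i. x $ i + t)"
      unfolding mem_box_cart
    proof
      fix i
      show "(\<chi> i. x $ i - t) $ i \<le> y $ i \<and> y $ i \<le> (\<chi> i. x $ i + t) $ i"
        using coord[of i] by (simp add: abs_le_iff)
    qed
  qed
  then have "emeasure lborel (C \<inter> B) \<le> emeasure lborel (cbox (\<chi> i. x $ i - t) (\<chi> i. x $ i + t))"
    by (intro emeasure_mono) auto
  also have "\<dots> = ennreal ((2 * t) ^ CARD('n))"
    using assms by (subst emeasure_lborel_cbox_cart) auto
  finally show ?thesis
    using \<open>B \<in> sets borel\<close> emeasure_lborel_unit_cube[where 'n='n]
    by (simp add: unif_cube_def C_def B_def[symmetric] cube_eq_cbox divide_ennreal_def)
qed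

lemma sets_pair_unif_cube:
  "sets ((unif_cube :: (real^'n) measure) \<Otimes>\<^sub>M unif_cube) = sets (borel \<Otimes>\<^sub>M borel)"
  by (rule sets_pair_measure_cong) simp_all

lemma borel_measurable_l1_cost_pair_unif_cube:
  "l1_cost \<in> borel_measurable ((unif_cube :: (real^'n) measure) \<Otimes>\<^sub>M unif_cube)"
  using borel_measurable_l1_cost measurable_cong_sets[OF sets_pair_unif_cube refl] by blast

lemma emeasure_pair_unif_cube_l1_le:
  assumes "t \<ge> 0"
  defines "\<nu> \<equiv> (unif_cube :: (real^'n) measure) \<Otimes>\<^sub>M unif_cube"
  shows "emeasure \<nu> {z \<in> space \<nu>. l1_cost z \<le> t} \<le> ennreal ((2 * t) ^ CARD('n))"
proof -
  let ?\<mu> = "unif_cube :: (real^'n) measure"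
  define A where "A = {z \<in> space \<nu>. l1_cost z \<le> t}"
  interpret \<mu>: prob_space ?\<mu>
    by (rule prob_space_unif_cube)
  have "A \<in> sets \<nu>"
    using borel_measurable_l1_cost_pair_unif_cube unfolding A_def \<nu>_def by measurable
  then have "emeasure \<nu> A = (\<integral>\<^sup>+x. emeasure ?\<mu> (Pair x -` A) \<partial>?\<mu>)"
    unfolding \<nu>_def by (rule \<mu>.emeasure_pair_measure_alt)
  also have "\<dots> \<le> (\<integral>\<^sup>+x. ennreal ((2 * t) ^ CARD('n)) \<partial>?\<mu>)"
  proof (rule nn_integral_mono)
    fix x
    have "Pair x -` A = {y. l1_cost (x, y) \<le> t}"
      by (simp add: A_def \<nu>_def space_pair_measure unif_cube_def)
    then show "emeasure ?\<mu> (Pair x -` A) \<le> ennreal ((2 * t) ^ CARD('n))"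
      using emeasure_unif_cube_l1_ball_le[OF assms(1)] by simp
  qed
  also have "\<dots> = ennreal ((2 * t) ^ CARD('n))"
    by (simp add: \<mu>.emeasure_space_1)
  finally show ?thesis
    by (simp add: A_def)
qed

lemma OT_reg_unif_cube_ge:
  fixes q \<epsilon> t :: real
  assumes "q > 1" "\<epsilon> > 0" "t \<ge> 0"
  shows "ereal (t - young_conj q (\<epsilon> / (q - 1)) t * (2 * t) ^ CARD('n) - \<epsilon> / (q - 1))
    \<le> OT_reg q \<epsilon> l1_cost (unif_cube :: (real^'n) measure) unif_cube"
  unfolding OT_reg_def
proof (rule INF_greatest)
  let ?\<mu> = "unif_cube :: (real^'n) measure"
  interpret \<nu>: prob_space "?\<mu> \<Otimes>\<^sub>M ?\<mu>"
    by (intro prob_space_pair prob_space_unif_cube)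
  fix \<pi> assume "\<pi> \<in> couplings ?\<mu> ?\<mu>"
  then show "ereal (t - young_conj q (\<epsilon> / (q - 1)) t * (2 * t) ^ CARD('n) - \<epsilon> / (q - 1))
      \<le> enn2ereal (\<integral>\<^sup>+z. ennreal (l1_cost z) \<partial>\<pi>)
        + ereal \<epsilon> * tsallis q \<pi> (?\<mu> \<Otimes>\<^sub>M ?\<mu>)"
    using assms emeasure_pair_unif_cube_l1_le[of t]
    by (intro \<nu>.cost_plus_tsallis_ge borel_measurable_l1_cost_pair_unif_cube)
      (auto simp: couplings_def l1_cost_nonneg)
qed

lemma OT_l1_unif_cube_eq_0: "OT l1_cost (unif_cube :: (real^'n) measure) unif_cube = 0"
  using prob_space_unif_cube borel_measurable_l1_cost
  by (intro OT_self_eq_0) (simp_all add: l1_cost_def)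

section \<open>The constants\<close>

lemma two_powr_ge_linear: "1 + 2/3 * x \<le> 2 powr (x::real)" if "x \<ge> 0"
proof -
  have "x * (2/3) \<le> x * ln 2"
    using ln2_ge_two_thirds that by (rule mult_left_mono)
  then have "1 + 2/3 * x \<le> 1 + x * ln 2"
    by simp
  also have "\<dots> \<le> exp (x * ln 2)"
    by (rule exp_ge_add_one_self)
  finally show ?thesis
    by (simp add: powr_def)
qed

lemma powr_le_1_plus_mult:
  fixes r x :: real
  assumes "0 \<le> r" "r \<le> 1" "x > 0"
  shows "x powr r \<le> 1 + r * (x - 1)"
  using Youngs_inequality_0[of r "1 - r" x 1] assms by (simp add: algebra_simps)

lemma one_plus_inverse_powr_le_exp_1:
  fixes s :: real
  assumes "s > 0"
  shows "(1 + 1/s) powr s \<le> exp 1"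
proof -
  have "1 + 1/s > 0"
    using assms by (simp add: add_pos_pos)
  then have "(1 + 1/s) powr s = exp (s * ln (1 + 1/s))"
    by (simp add: powr_def)
  also have "\<dots> \<le> exp 1"
    using ln_add_one_self_le_self[of "1/s"] assms by (simp add: field_simps)
  finally show ?thesis .
qed

lemma one_plus_inverse_powr_le_9_4:
  fixes s :: real
  assumes "1 \<le> s" "s \<le> 2"
  shows "(1 + 1/s) powr s \<le> 9/4"
proof -
  have pos: "1 + 1/s > 0"
    using assms by (simp add: add_pos_pos)
  have "(1 + 1/s) powr s = (1 + 1/s) * (1 + 1/s) powr (s - 1)"
    using pos powr_add[of "1 + 1/s" 1 "s - 1"] by simp
  also have "\<dots> \<le> (1 + 1/s) * (1 + (s - 1) * (1/s))"
    using powr_le_1_plus_mult[of "s - 1", OF _ _ pos] pos assms by (intro mult_left_mono) auto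
  also have "\<dots> = 9/4 - (1/s - 1/2)^2"
    using assms by (simp add: field_simps power2_eq_square)
  finally show ?thesis
    by (smt (verit) zero_le_power2)
qed

lemma one_plus_inverse_powr_bound:
  fixes s :: real
  assumes s: "s > 0"
  shows "(s + 1) * (1 + 1/s) powr s \<le> 1 + 2 powr (s + 1)"
proof -
  have split: "2 powr (s + 1) = 2 powr k * 2 powr (s + 1 - k)" for k :: real
    by (simp add: powr_add[symmetric])
  consider "s \<le> 1" | "1 \<le> s" "s \<le> 2" | "2 \<le> s"
    by linarith
  then show ?thesis
  proof cases
    case 1
    have "(1 + 1/s) powr s \<le> 2"
      using powr_le_1_plus_mult[OF _ 1, of "1 + 1/s"] s by (simp add: add_pos_pos)
    then have "(s + 1) * (1 + 1/s) powr s \<le> (s + 1) * 2"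
      using s by (intro mult_left_mono) auto
    moreover have "1 + 2/3 * s \<le> 2 powr s"
      using s by (intro two_powr_ge_linear) simp
    ultimately show ?thesis
      using split[of 1, simplified] 1 by argo
  next
    case 2
    then have "(s + 1) * (1 + 1/s) powr s \<le> (s + 1) * (9/4)"
      using one_plus_inverse_powr_le_9_4 s by (intro mult_left_mono) auto
    moreover have "1 + 2/3 * (s - 1) \<le> 2 powr (s - 1)"
      using 2 by (intro two_powr_ge_linear) simp
    ultimately show ?thesis
      using split[of 2, simplified] 2 by argo
  next
    case 3
    have "(s + 1) * (1 + 1/s) powr s \<le> (s + 1) * 3"
      using one_plus_inverse_powr_le_exp_1[OF s] exp_le s by (intro mult_left_mono) auto
    moreover have "1 + 2/3 * (s - 2) \<le> 2 powr (s - 2)"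
      using 3 by (intro two_powr_ge_linear) simp
    ultimately show ?thesis
      using split[of 3, simplified] 3 by argo
  qed
qed

definition gap_K1 :: "real \<Rightarrow> real \<Rightarrow> real" where
  "gap_K1 q d = ((q - 1) * d + 1) / ((q - 1) * d + q) *
      ((q - 1) / (((q - 1) * d + q) * 2 powr (((q - 1) * d + 1) / (q - 1)))
        * (q / (q - 1)) powr (q / (q - 1))) powr ((q - 1) / ((q - 1) * d + 1))"

definition gap_K2 :: "real \<Rightarrow> real \<Rightarrow> real" where
  "gap_K2 q d = (1 + 2 powr (((q - 1) * d + 1) / (q - 1))) * q powr (- (q / (q - 1)))"

lemma le_gap_K2:
  fixes q d :: real
  assumes q: "q > 1" and d: "d \<ge> 1"
  shows "1 / (q - 1) \<le> gap_K2 q d"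
proof -
  define s where "s = 1 / (q - 1)"
  have s: "s > 0"
    using q by (simp add: s_def)
  have q_eq: "q = 1 + 1/s"
    using q by (simp add: s_def)
  have exps: "((q - 1) * d + 1) / (q - 1) = d + s" "q / (q - 1) = s + 1"
    using q by (simp_all add: s_def field_simps)
  have "s * q powr (s + 1) = (s * q) * q powr s"
    using q by (simp add: powr_add mult_ac)
  also have "\<dots> = (s + 1) * (1 + 1/s) powr s"
    using s by (simp add: q_eq distrib_left)
  also have "\<dots> \<le> 1 + 2 powr (s + 1)"
    using s by (rule one_plus_inverse_powr_bound)
  also have "\<dots> \<le> 1 + 2 powr (d + s)"
    using d by simp
  finally have "s \<le> (1 + 2 powr (d + s)) / q powr (s + 1)"
    using q by (simp add: pos_le_divide_eq)
  also have "\<dots> = gap_K2 q d"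
    unfolding gap_K2_def exps powr_minus by (simp add: divide_inverse)
  finally show ?thesis
    by (simp add: s_def)
qed

lemma young_conj_tsallis_weight:
  fixes q \<epsilon> t :: real
  assumes q: "q > 1" and \<epsilon>: "\<epsilon> > 0"
  defines "s \<equiv> 1 / (q - 1)"
  shows "young_conj q (\<epsilon> / (q - 1)) t = t powr (s + 1) * (\<epsilon> * (s + 1)) powr (- s) / (s + 1)"
proof -
  have "(q - 1) / q = 1 / (s + 1)" "q / (q - 1) = s + 1" "- 1 / (q - 1) = - s"
      "\<epsilon> / (q - 1) * q = \<epsilon> * (s + 1)"
    using q by (simp_all add: s_def field_simps)
  then show ?thesis
    unfolding young_conj_def by simp
qed

lemma gap_K1_mult_powr_eq:
  fixes q \<epsilon> d :: real
  assumes q: "q > 1" and \<epsilon>: "\<epsilon> > 0" and d: "d \<ge> 0"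
  defines "s \<equiv> 1 / (q - 1)" and "D \<equiv> d + 1 / (q - 1)"
  shows "gap_K1 q d * \<epsilon> powr (1 / ((q - 1) * d + 1))
    = D / (D + 1) * ((s + 1) powr (s + 1) * \<epsilon> powr s / ((D + 1) * 2 powr D)) powr (1 / D)"
proof -
  have s: "s > 0" and D: "D > 0"
    using q d by (simp_all add: s_def D_def add_nonneg_pos)
  have qs: "q - 1 = 1 / s" and q_eq: "q = (s + 1) / s"
    using q s by (simp_all add: s_def field_simps)
  have lin: "(q - 1) * d + 1 = D / s" "(q - 1) * d + q = (D + 1) / s"
    using s by (simp_all add: qs q_eq D_def s_def[symmetric] field_simps)
  have "((q - 1) * d + 1) / ((q - 1) * d + q) = D / (D + 1)"
    "((q - 1) * d + 1) / (q - 1) = D" "q / (q - 1) = s + 1"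
    "(q - 1) / (((q - 1) * d + q) * 2 powr D) = 1 / ((D + 1) * 2 powr D)"
    "(q - 1) / ((q - 1) * d + 1) = 1 / D" "1 / ((q - 1) * d + 1) = s * (1 / D)"
    unfolding lin using s D by (simp_all add: qs q_eq field_simps)
  moreover have "\<epsilon> powr (s * (1 / D)) = (\<epsilon> powr s) powr (1 / D)"
    by (simp add: powr_powr)
  ultimately show ?thesis
    unfolding gap_K1_def using s D \<epsilon> by (simp only:) (simp add: powr_mult[symmetric])
qed

(* Up to the factor 2 powr (s / D), t maximises t - young_conj q (eps/(q-1)) t (2t)^d, a function
   of the form t - C t^(D+1), whose maximum is D/(D+1) times the maximiser. *)
lemma young_conj_at_radius_le:
  fixes q \<epsilon> d :: real
  assumes q: "q > 1" and \<epsilon>: "\<epsilon> > 0" and d: "d \<ge> 0"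
  defines "s \<equiv> 1 / (q - 1)" and "D \<equiv> d + 1 / (q - 1)"
  defines "t \<equiv> ((s + 1) powr (s + 1) * \<epsilon> powr s / ((D + 1) * 2 powr D)) powr (1 / D)"
  shows "young_conj q (\<epsilon> / (q - 1)) t * (2 * t) powr d \<le> t / (D + 1)"
proof -
  have s: "s > 0" and D: "D > 0"
    using q d by (simp_all add: s_def D_def add_nonneg_pos)
  then have t: "t > 0"
    and tD: "t powr D = (s + 1) powr (s + 1) * \<epsilon> powr s / ((D + 1) * 2 powr D)"
    using \<epsilon> by (simp_all add: t_def powr_powr)
  have powers_t: "t powr (s + 1) * t powr d = t * t powr D"
    using t by (simp add: D_def s_def powr_add mult_ac)
  have "(\<epsilon> * (s + 1)) powr (- s) = \<epsilon> powr (- s) * (s + 1) powr (- s)"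
    using s \<epsilon> by (simp add: powr_mult)
  then have powers_\<epsilon>:
      "(\<epsilon> * (s + 1)) powr (- s) / (s + 1) = 1 / (\<epsilon> powr s * (s + 1) powr (s + 1))"
    using s \<epsilon> by (simp add: powr_minus powr_add divide_inverse mult_ac)
  have "young_conj q (\<epsilon> / (q - 1)) t * (2 * t) powr d
      = (t powr (s + 1) * t powr d) * 2 powr d * ((\<epsilon> * (s + 1)) powr (- s) / (s + 1))"
    unfolding young_conj_tsallis_weight[OF q \<epsilon>, folded s_def] using t by (simp add: powr_mult)
  also have "\<dots> = t * (2 powr d / ((D + 1) * 2 powr D))"
    unfolding powers_t powers_\<epsilon> tD using s D \<epsilon> by (simp add: field_simps)
  also have "\<dots> \<le> t * (1 / (D + 1))"
  proof -
    have "2 powr d \<le> 2 powr D"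
      using s by (simp add: D_def s_def)
    then have "2 powr d / ((D + 1) * 2 powr D) \<le> 1 / (D + 1)"
      using D by (simp add: divide_simps)
    then show ?thesis
      using t by (intro mult_left_mono) auto
  qed
  finally show ?thesis
    by simp
qed

lemma gap_K1_le_sub_young_conj:
  fixes q \<epsilon> d :: real
  assumes q: "q > 1" and \<epsilon>: "\<epsilon> > 0" and d: "d \<ge> 0"
  shows "\<exists>t>0. gap_K1 q d * \<epsilon> powr (1 / ((q - 1) * d + 1))
    \<le> t - young_conj q (\<epsilon> / (q - 1)) t * (2 * t) powr d"
proof -
  define s where "s = 1 / (q - 1)"
  define D where "D = d + 1 / (q - 1)"
  define t where "t = ((s + 1) powr (s + 1) * \<epsilon> powr s / ((D + 1) * 2 powr D)) powr (1 / D)"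
  have s: "s > 0" and D: "D > 0"
    using q d by (simp_all add: s_def D_def add_nonneg_pos)
  have "t > 0"
    using s D \<epsilon> by (simp add: t_def)
  moreover have "gap_K1 q d * \<epsilon> powr (1 / ((q - 1) * d + 1)) = t - t / (D + 1)"
    using gap_K1_mult_powr_eq[OF q \<epsilon> d] D by (simp add: s_def D_def t_def field_simps)
  moreover have "young_conj q (\<epsilon> / (q - 1)) t * (2 * t) powr d \<le> t / (D + 1)"
    using young_conj_at_radius_le[OF q \<epsilon> d] by (simp add: s_def D_def t_def)
  ultimately show ?thesis
    by (intro exI[of _ t]) auto
qed

theorem theorem1p3:
  fixes q \<epsilon> :: real
  assumes "q > 1" and "\<epsilon> > 0"
  defines "d \<equiv> real CARD('n)"
  defines "K1 \<equiv> ((q - 1) * d + 1) / ((q - 1) * d + q) *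
      ((q - 1) / (((q - 1) * d + q) * 2 powr (((q - 1) * d + 1) / (q - 1)))
        * (q / (q - 1)) powr (q / (q - 1))) powr ((q - 1) / ((q - 1) * d + 1))"
  defines "K2 \<equiv> (1 + 2 powr (((q - 1) * d + 1) / (q - 1))) * q powr (- (q / (q - 1)))"
  shows "OT_reg q \<epsilon> l1_cost (unif_cube :: (real^'n) measure) (unif_cube :: (real^'n) measure)
           - OT l1_cost (unif_cube :: (real^'n) measure) (unif_cube :: (real^'n) measure)
         \<ge> ereal (K1 * \<epsilon> powr (1 / ((q - 1) * d + 1)) - K2 * \<epsilon>)"
proof -
  have d: "d \<ge> 1"
    by (simp add: d_def Suc_le_eq)
  obtain t where t: "t > 0" and K1: "K1 * \<epsilon> powr (1 / ((q - 1) * d + 1))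
      \<le> t - young_conj q (\<epsilon> / (q - 1)) t * (2 * t) ^ CARD('n)"
    using gap_K1_le_sub_young_conj[OF assms(1,2), of d] d
    by (auto simp: K1_def gap_K1_def d_def powr_realpow)
  have "\<epsilon> / (q - 1) \<le> K2 * \<epsilon>"
    using mult_right_mono[OF le_gap_K2[OF assms(1) d], of \<epsilon>] assms(2)
    by (simp add: K2_def gap_K2_def)
  with K1 have "ereal (K1 * \<epsilon> powr (1 / ((q - 1) * d + 1)) - K2 * \<epsilon>)
      \<le> ereal (t - young_conj q (\<epsilon> / (q - 1)) t * (2 * t) ^ CARD('n) - \<epsilon> / (q - 1))"
    by simp
  also have "\<dots> \<le> OT_reg q \<epsilon> l1_cost (unif_cube :: (real^'n) measure) unif_cube"
    using t by (intro OT_reg_unif_cube_ge assms(1,2)) simp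
  finally show ?thesis
    by (simp add: OT_l1_unif_cube_eq_0)
qed

end
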